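(* Let $d_1,d_2$ be positive integers. The set $U=\{F\in\Omega_2(d_1,d_2):\ J(F)\text{ is reduced and }\deg J(F)=d_1+d_2-2\}$ is an open subset of $\Omega_2(d_1,d_2)$.
   Context: $\Omega_2(d_1,d_2)$ is the set of polynomial mappings $F=(f,g):\mathbb{C}^2\to\mathbb{C}^2$ with $\deg f\le d_1$, $\deg g\le d_2$, identified with $\mathbb{C}^N$ via coefficients. $J(F)=f_xg_y-f_yg_x$; reduced means square-free as a polynomial. *)

theory Defs
  imports "HOL-Analysis.Analysis" "HOL-Computational_Algebra.Polynomial"
    "HOL-Computational_Algebra.Squarefree"
begin

text \<open>Bivariate polynomials in x, y are represented as complex poly poly:
  the outer variable is y, the inner variable (in the coefficients) is x.
  A coefficient vector is a function c :: nat \<times> nat \<Rightarrow> complex, c(i,j) being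
  the coefficient of x^i y^j.\<close>

definition bipoly :: "(nat \<times> nat \<Rightarrow> complex) \<Rightarrow> complex poly poly" where
  "bipoly c = (\<Sum>(i,j)\<in>{(i,j). c (i,j) \<noteq> 0}. monom (monom (c (i,j)) i) j)"

definition dx :: "complex poly poly \<Rightarrow> complex poly poly" where
  "dx p = map_poly pderiv p"

definition dy :: "complex poly poly \<Rightarrow> complex poly poly" where
  "dy p = pderiv p"

definition tdeg :: "complex poly poly \<Rightarrow> nat" where
  "tdeg p = (if p = 0 then 0 else Max {j + degree (coeff p j) | j. coeff p j \<noteq> 0})"

text \<open>Omega_2(d1,d2), identified with C^N through coefficients: pairs of
  coefficient functions supported on {i+j \<le> d1} resp. {i+j \<le> d2}, with the
  (subspace of the) product topology, which on this finite-dimensional space is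
  the Euclidean topology of C^N.\<close>
definition Omega2 :: "nat \<Rightarrow> nat \<Rightarrow> ((nat \<times> nat \<Rightarrow> complex) \<times> (nat \<times> nat \<Rightarrow> complex)) set" where
  "Omega2 d1 d2 = {(a, b). (\<forall>i j. d1 < i + j \<longrightarrow> a (i,j) = 0) \<and> (\<forall>i j. d2 < i + j \<longrightarrow> b (i,j) = 0)}"

definition jac :: "complex poly poly \<Rightarrow> complex poly poly \<Rightarrow> complex poly poly" where
  "jac f g = dx f * dy g - dy f * dx g"

end

theory Submission
  imports Defs "HOL-Computational_Algebra.Field_as_Ring" "Subresultants.Subresultant_Gcd"
begin

text \<open>Write \<open>n = d1 + d2 - 2\<close>, so that \<open>deg J(F) \<le> n\<close> on all of \<open>\<Omega>\<^sub>2(d1, d2)\<close>, and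
  fix \<open>F\<^sub>0 \<in> U\<close>. After the shear \<open>x \<mapsto> x + c y\<close>, with \<open>c\<close> not a root of the degree-\<open>n\<close> form
  of \<open>J(F\<^sub>0)\<close>, the Jacobian of every \<open>F\<close> near \<open>F\<^sub>0\<close> is a polynomial in \<open>y\<close> of degree \<open>n\<close>
  whose leading coefficient is a nonzero constant; that constant being nonzero also means
  \<open>deg J(F) = n\<close>. For such a polynomial \<open>Q\<close> it suffices that one specialization \<open>Q(x\<^sub>0, y)\<close> be
  squarefree, which holds when its resultant with its \<open>y\<close>-derivative is nonzero. At \<open>F\<^sub>0\<close>
  the resultant of \<open>Q\<close> and \<open>\<partial>Q/\<partial>y\<close> is a nonzero polynomial in \<open>x\<close>, so a suitable \<open>x\<^sub>0\<close> exists;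
  both the leading coefficient and this resultant, a Sylvester determinant of fixed size, are
  continuous in the coefficients of \<open>F\<close>, so they remain nonzero near \<open>F\<^sub>0\<close>.\<close>

definition bicoeff :: "'a::zero poly poly \<Rightarrow> nat \<Rightarrow> nat \<Rightarrow> 'a" where
  "bicoeff P i j = coeff (coeff P j) i"

definition total_degree_le :: "nat \<Rightarrow> 'a::zero poly poly \<Rightarrow> bool" where
  "total_degree_le d P \<longleftrightarrow> (\<forall>i j. d < i + j \<longrightarrow> bicoeff P i j = 0)"

lemma bicoeff_eqI: "(\<And>i j. bicoeff P i j = bicoeff Q i j) \<Longrightarrow> P = Q"
  unfolding bicoeff_def by (intro poly_eqI) auto

lemma bicoeff_diff [simp]: "bicoeff (P - Q) i j = bicoeff P i j - bicoeff Q i j"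
  by (simp add: bicoeff_def)

lemma bicoeff_sum: "bicoeff (sum f A) i j = (\<Sum>x\<in>A. bicoeff (f x) i j)"
  by (induction A rule: infinite_finite_induct) (auto simp: bicoeff_def)

lemma bicoeff_monom: "bicoeff (monom (monom a k) l) i j = (if k = i \<and> l = j then a else 0)"
  by (auto simp: bicoeff_def coeff_monom)

lemma bicoeff_mult:
  "bicoeff (P * Q) i j = (\<Sum>a\<le>j. \<Sum>b\<le>i. bicoeff P b a * bicoeff Q (i - b) (j - a))"
  by (simp add: bicoeff_def coeff_mult coeff_sum)

lemma bicoeff_dx: "bicoeff (dx P) i j = of_nat (Suc i) * bicoeff P (Suc i) j"
  by (simp add: bicoeff_def dx_def coeff_map_poly coeff_pderiv)

lemma bicoeff_dy: "bicoeff (dy P) i j = of_nat (Suc j) * bicoeff P i (Suc j)"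
  by (simp add: bicoeff_def dy_def coeff_pderiv of_nat_poly)

lemma bicoeff_bipoly:
  assumes "\<forall>i j. d < i + j \<longrightarrow> a (i, j) = 0"
  shows "bicoeff (bipoly a) i j = a (i, j)"
proof -
  let ?S = "{(i, j). a (i, j) \<noteq> 0}"
  have "finite ?S"
    by (rule finite_subset[of _ "{0..d} \<times> {0..d}"]) (use assms in force)+
  have "bicoeff (bipoly a) i j = (\<Sum>x\<in>?S. if x = (i, j) then a x else 0)"
    unfolding bipoly_def bicoeff_sum
    by (intro sum.cong) (auto simp: bicoeff_monom split: if_splits)
  also have "\<dots> = a (i, j)"
    using \<open>finite ?S\<close> by (auto simp: sum.delta)
  finally show ?thesis .
qed

lemma total_degree_le_bipoly: "\<forall>i j. d < i + j \<longrightarrow> a (i, j) = 0 \<Longrightarrow> total_degree_le d (bipoly a)"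
  unfolding total_degree_le_def by (metis bicoeff_bipoly)

lemma total_degree_le_mult:
  assumes "total_degree_le d P" and "total_degree_le e Q"
  shows "total_degree_le (d + e) (P * Q)"
  unfolding total_degree_le_def
proof (intro allI impI)
  fix i j assume ij: "d + e < i + j"
  have "bicoeff P b a * bicoeff Q (i - b) (j - a) = 0" if "a \<le> j" "b \<le> i" for a b
  proof (cases "d < b + a")
    case True
    then show ?thesis using assms(1) unfolding total_degree_le_def by simp
  next
    case False
    then have "e < (i - b) + (j - a)" using ij that by linarith
    then show ?thesis using assms(2) unfolding total_degree_le_def by simp
  qed
  then show "bicoeff (P * Q) i j = 0"
    unfolding bicoeff_mult by (auto intro!: sum.neutral)
qed

lemma total_degree_le_diff:
  "total_degree_le d P \<Longrightarrow> total_degree_le d Q \<Longrightarrow> total_degree_le d (P - Q)"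
  unfolding total_degree_le_def by simp

lemma total_degree_le_dx: "total_degree_le d P \<Longrightarrow> total_degree_le (d - 1) (dx P)"
  unfolding total_degree_le_def bicoeff_dx by auto

lemma total_degree_le_dy: "total_degree_le d P \<Longrightarrow> total_degree_le (d - 1) (dy P)"
  unfolding total_degree_le_def bicoeff_dy by auto

lemma total_degree_le_jac:
  assumes "total_degree_le d f" and "total_degree_le e g"
  shows "total_degree_le (d - 1 + (e - 1)) (jac f g)"
  unfolding jac_def
  by (intro total_degree_le_diff total_degree_le_mult total_degree_le_dx total_degree_le_dy assms)

text \<open>\<open>top_form P n\<close> is the homogeneous part of degree \<open>n\<close> of \<open>P\<close>, with \<open>y\<close> set to \<open>1\<close>.\<close>

definition top_form :: "'a::comm_monoid_add poly poly \<Rightarrow> nat \<Rightarrow> 'a poly" where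
  "top_form P n = (\<Sum>i\<le>n. monom (bicoeff P i (n - i)) i)"

lemma poly_top_form: "poly (top_form P n) c = (\<Sum>i\<le>n. bicoeff P i (n - i) * c ^ i)"
  for P :: "'a::comm_semiring_1 poly poly"
  by (simp add: top_form_def poly_sum poly_monom)

lemma top_form_eq_0_iff: "top_form P n = 0 \<longleftrightarrow> (\<forall>i\<le>n. bicoeff P i (n - i) = 0)"
proof -
  have "coeff (top_form P n) i = (if i \<le> n then bicoeff P i (n - i) else 0)" for i
    by (simp add: top_form_def coeff_sum coeff_monom)
  then show ?thesis
    by (metis coeff_0 poly_eqI)
qed

lemma top_form_nonzero_iff_tdeg:
  assumes "total_degree_le n P"
  shows "top_form P n \<noteq> 0 \<longleftrightarrow> P \<noteq> 0 \<and> tdeg P = n"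
proof -
  let ?M = "{j + degree (coeff P j) | j. coeff P j \<noteq> 0}"
  have bound: "j + degree (coeff P j) \<le> n" if "coeff P j \<noteq> 0" for j
  proof -
    have "bicoeff P (degree (coeff P j)) j \<noteq> 0"
      using that by (simp add: bicoeff_def)
    then show ?thesis
      using assms unfolding total_degree_le_def by force
  qed
  have "finite ?M"
    by (rule finite_subset[of _ "{0..n}"]) (use bound in auto)
  have top: "n \<in> ?M \<longleftrightarrow> (\<exists>i\<le>n. bicoeff P i (n - i) \<noteq> 0)"
  proof
    assume "n \<in> ?M"
    then obtain j where "coeff P j \<noteq> 0" "j + degree (coeff P j) = n" by auto
    then show "\<exists>i\<le>n. bicoeff P i (n - i) \<noteq> 0"
      by (intro exI[of _ "degree (coeff P j)"]) (auto simp: bicoeff_def)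
  next
    assume "\<exists>i\<le>n. bicoeff P i (n - i) \<noteq> 0"
    then obtain i where i: "i \<le> n" "coeff (coeff P (n - i)) i \<noteq> 0"
      by (auto simp: bicoeff_def)
    then have "coeff P (n - i) \<noteq> 0" and "i \<le> degree (coeff P (n - i))"
      by (auto intro: le_degree)
    with bound[of "n - i"] i(1) show "n \<in> ?M"
      by (intro CollectI exI[of _ "n - i"]) auto
  qed
  have nonempty: "?M \<noteq> {} \<longleftrightarrow> P \<noteq> 0"
    by (auto simp: poly_eq_iff)
  have "n \<in> ?M \<longleftrightarrow> P \<noteq> 0 \<and> tdeg P = n"
  proof
    assume "n \<in> ?M"
    then have "P \<noteq> 0" and "Max ?M = n"
      using nonempty bound \<open>finite ?M\<close> by (auto intro!: Max_eqI)
    then show "P \<noteq> 0 \<and> tdeg P = n"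
      by (simp add: tdeg_def)
  next
    assume "P \<noteq> 0 \<and> tdeg P = n"
    then have "?M \<noteq> {}" and "Max ?M = n"
      using nonempty by (auto simp: tdeg_def)
    then show "n \<in> ?M"
      using Max_in[OF \<open>finite ?M\<close>] by force
  qed
  with top show ?thesis
    by (simp add: top_form_eq_0_iff)
qed

section \<open>Continuity in the coefficients\<close>

definition coeffwise_continuous_on ::
    "'a::topological_space set \<Rightarrow> ('a \<Rightarrow> complex poly poly) \<Rightarrow> bool" where
  "coeffwise_continuous_on S P \<longleftrightarrow> (\<forall>i j. continuous_on S (\<lambda>F. bicoeff (P F) i j))"

lemma coeffwise_continuous_on_mult:
  "coeffwise_continuous_on S P \<Longrightarrow> coeffwise_continuous_on S Q \<Longrightarrow>
    coeffwise_continuous_on S (\<lambda>F. P F * Q F)"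
  unfolding coeffwise_continuous_on_def bicoeff_mult by (intro allI continuous_intros) auto

lemma coeffwise_continuous_on_diff:
  "coeffwise_continuous_on S P \<Longrightarrow> coeffwise_continuous_on S Q \<Longrightarrow>
    coeffwise_continuous_on S (\<lambda>F. P F - Q F)"
  unfolding coeffwise_continuous_on_def bicoeff_diff by (intro allI continuous_intros) auto

lemma coeffwise_continuous_on_dx:
  "coeffwise_continuous_on S P \<Longrightarrow> coeffwise_continuous_on S (\<lambda>F. dx (P F))"
  unfolding coeffwise_continuous_on_def bicoeff_dx by (intro allI continuous_intros) auto

lemma coeffwise_continuous_on_dy:
  "coeffwise_continuous_on S P \<Longrightarrow> coeffwise_continuous_on S (\<lambda>F. dy (P F))"
  unfolding coeffwise_continuous_on_def bicoeff_dy by (intro allI continuous_intros) auto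

lemma coeffwise_continuous_on_jac:
  "coeffwise_continuous_on S P \<Longrightarrow> coeffwise_continuous_on S Q \<Longrightarrow>
    coeffwise_continuous_on S (\<lambda>F. jac (P F) (Q F))"
  unfolding jac_def
  by (intro coeffwise_continuous_on_diff coeffwise_continuous_on_mult
      coeffwise_continuous_on_dx coeffwise_continuous_on_dy)

lemma coeffwise_continuous_on_bipoly:
  assumes "\<And>i j. continuous_on S (\<lambda>F. a F (i, j))"
    and "\<And>F. F \<in> S \<Longrightarrow> \<forall>i j. d < i + j \<longrightarrow> a F (i, j) = 0"
  shows "coeffwise_continuous_on S (\<lambda>F. bipoly (a F))"
  unfolding coeffwise_continuous_on_def
proof (intro allI)
  fix i j
  show "continuous_on S (\<lambda>F. bicoeff (bipoly (a F)) i j)"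
    using assms(1) by (rule continuous_on_eq) (simp add: bicoeff_bipoly[OF assms(2)])
qed

lemma coeffwise_continuous_on_Omega2_bipoly:
  "coeffwise_continuous_on (Omega2 d1 d2) (\<lambda>F. bipoly (fst F))"
  "coeffwise_continuous_on (Omega2 d1 d2) (\<lambda>F. bipoly (snd F))"
proof -
  have fst: "continuous_on (Omega2 d1 d2) (\<lambda>F. fst F k)"
    and snd: "continuous_on (Omega2 d1 d2) (\<lambda>F. snd F k)" for k
    by (auto intro!: continuous_on_compose2[OF continuous_on_product_coordinates continuous_on_fst]
        continuous_on_compose2[OF continuous_on_product_coordinates continuous_on_snd])
  show "coeffwise_continuous_on (Omega2 d1 d2) (\<lambda>F. bipoly (fst F))"
    by (rule coeffwise_continuous_on_bipoly[OF fst, where d = d1]) (auto simp: Omega2_def)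
  show "coeffwise_continuous_on (Omega2 d1 d2) (\<lambda>F. bipoly (snd F))"
    by (rule coeffwise_continuous_on_bipoly[OF snd, where d = d2]) (auto simp: Omega2_def)
qed

lemma continuous_on_if_const:
  "continuous_on S f \<Longrightarrow> continuous_on S g \<Longrightarrow> continuous_on S (\<lambda>x. if b then f x else g x)"
  by (cases b) auto

lemma continuous_on_det_sylvester_mat_sub:
  fixes p q :: "'a::topological_space \<Rightarrow> 'b::real_normed_field poly"
  assumes "\<And>k. continuous_on S (\<lambda>F. coeff (p F) k)" and "\<And>k. continuous_on S (\<lambda>F. coeff (q F) k)"
  shows "continuous_on S (\<lambda>F. Determinant.det (sylvester_mat_sub m n (p F) (q F)))"
proof -
  let ?A = "\<lambda>F. sylvester_mat_sub m n (p F) (q F)"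
  have entry: "continuous_on S (\<lambda>F. ?A F $$ (i, j))" if "i < m + n" "j < m + n" for i j
    unfolding sylvester_mat_sub_index[OF that]
    by (intro continuous_on_if_const continuous_on_const assms)
  have "continuous_on S (\<lambda>F. \<Sum>\<pi> | \<pi> permutes {0..<m + n}.
      of_int (sign \<pi>) * (\<Prod>i = 0..<m + n. ?A F $$ (i, \<pi> i)))"
    by (intro continuous_on_sum continuous_on_mult continuous_on_const continuous_on_prod entry)
      (auto simp: permutes_in_image)
  then show ?thesis
    by (rule continuous_on_eq) (simp add: det_def'[OF sylvester_mat_sub_carrier])
qed

section \<open>Substitution and the shear \<open>(x, y) \<mapsto> (x + c y, y)\<close>\<close>

definition subst_x :: "'a::comm_ring_1 poly poly \<Rightarrow> 'a poly \<Rightarrow> 'a poly poly" where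
  "subst_x U a = poly (map_poly (\<lambda>b. [:[:b:]:]) a) U"

definition subst_xy ::
    "'a::comm_ring_1 poly poly \<Rightarrow> 'a poly poly \<Rightarrow> 'a poly poly \<Rightarrow> 'a poly poly" where
  "subst_xy U V P = poly (map_poly (subst_x U) P) V"

definition var_x :: "'a::comm_ring_1 poly poly" where
  "var_x = [:[:0, 1:]:]"

definition var_y :: "'a::comm_ring_1 poly poly" where
  "var_y = [:0, 1:]"

lemma comm_ring_hom_subst_x: "comm_ring_hom (subst_x U)"
proof -
  have "comm_ring_hom (\<lambda>b::'a. [:[:b:]:])"
    by unfold_locales auto
  then interpret map_poly_comm_ring_hom "\<lambda>b::'a. [:[:b:]:]"
    by (simp add: map_poly_comm_ring_hom_def)
  show ?thesis
    by unfold_locales (auto simp: subst_x_def hom_add hom_mult)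
qed

lemma comm_ring_hom_subst_xy: "comm_ring_hom (subst_xy U V)"
proof -
  interpret map_poly_comm_ring_hom "subst_x U"
    using comm_ring_hom_subst_x by (simp add: map_poly_comm_ring_hom_def)
  show ?thesis
    by unfold_locales (auto simp: subst_xy_def hom_add hom_mult)
qed

lemma subst_x_0 [simp]: "subst_x U 0 = 0"
  by (simp add: subst_x_def)

lemma subst_xy_0 [simp]: "subst_xy U V 0 = 0"
  by (simp add: subst_xy_def)

lemma subst_x_1 [simp]: "subst_x U 1 = 1"
  by (simp add: subst_x_def)

lemma subst_xy_1 [simp]: "subst_xy U V 1 = 1"
  by (simp add: subst_xy_def)

lemma subst_x_pCons: "subst_x U (pCons b a) = [:[:b:]:] + U * subst_x U a"
  by (simp add: subst_x_def Polynomial.map_poly_pCons)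

lemma subst_xy_pCons: "subst_xy U V (pCons a P) = subst_x U a + V * subst_xy U V P"
  by (simp add: subst_xy_def Polynomial.map_poly_pCons)

lemma subst_x_hom:
  assumes "comm_ring_hom \<phi>" and "\<And>b. \<phi> [:[:b:]:] = [:[:b:]:]"
  shows "\<phi> (subst_x U a) = subst_x (\<phi> U) a"
proof -
  interpret comm_ring_hom \<phi> by fact
  show ?thesis
    by (induction a) (simp_all add: subst_x_pCons hom_add hom_mult assms(2))
qed

lemma subst_xy_hom:
  assumes "comm_ring_hom \<phi>" and "\<And>b. \<phi> [:[:b:]:] = [:[:b:]:]"
  shows "\<phi> (subst_xy U V P) = subst_xy (\<phi> U) (\<phi> V) P"
proof -
  interpret comm_ring_hom \<phi> by fact
  show ?thesis
    by (induction P) (simp_all add: subst_xy_pCons hom_add hom_mult subst_x_hom[OF assms])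
qed

lemma subst_xy_const [simp]: "subst_xy U V [:[:b:]:] = [:[:b:]:]"
  using subst_xy_pCons[of U V "[:b:]" 0] subst_x_pCons[of U b 0] by simp

lemma subst_xy_var_x [simp]: "subst_xy U V var_x = U"
  using subst_xy_pCons[of U V "[:0, 1:]" 0] by (simp add: var_x_def subst_x_pCons)

lemma subst_xy_var_y [simp]: "subst_xy U V var_y = V"
  by (simp add: var_y_def subst_xy_pCons)

lemma subst_xy_var_x_var_y: "subst_xy var_x var_y P = P"
proof -
  have "subst_x var_x a = [:a:]" for a :: "'a poly"
    by (induction a) (simp_all add: subst_x_pCons var_x_def)
  then show ?thesis
    by (induction P) (simp_all add: subst_xy_pCons var_y_def)
qed

definition shear :: "'a::comm_ring_1 \<Rightarrow> 'a poly poly \<Rightarrow> 'a poly poly" where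
  "shear c = subst_xy (var_x + [:[:c:]:] * var_y) var_y"

abbreviation shear_x :: "'a::comm_ring_1 \<Rightarrow> 'a poly poly" where
  "shear_x c \<equiv> [:[:0, 1:], [:c:]:]"

lemma comm_ring_hom_shear: "comm_ring_hom (shear c)"
  unfolding shear_def by (rule comm_ring_hom_subst_xy)

lemma shear_const [simp]: "shear c [:[:b:]:] = [:[:b:]:]"
  by (simp add: shear_def)

lemma shear_var_x [simp]: "shear c var_x = var_x + [:[:c:]:] * var_y"
  by (simp add: shear_def)

lemma shear_var_y [simp]: "shear c var_y = var_y"
  by (simp add: shear_def)

lemma shear_neg_shear: "shear (- c) (shear c P) = P"
proof -
  interpret comm_ring_hom "shear (- c)"
    by (rule comm_ring_hom_shear)
  have "shear (- c) (shear c P) =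
      subst_xy (shear (- c) (var_x + [:[:c:]:] * var_y)) (shear (- c) var_y) P"
    unfolding shear_def[of c] by (rule subst_xy_hom[OF comm_ring_hom_shear]) simp
  also have "shear (- c) (var_x + [:[:c:]:] * var_y) =
      var_x + [:[:- c:]:] * var_y + [:[:c:]:] * var_y"
    by (simp add: hom_add hom_mult del: mult_pCons_left)
  also have "\<dots> = var_x + ([:[:- c:]:] + [:[:c:]:]) * var_y"
    by (simp only: distrib_right add.assoc)
  finally show ?thesis
    by (simp add: subst_xy_var_x_var_y)
qed

lemma squarefree_reflect_hom:
  assumes "comm_ring_hom \<phi>" and "comm_ring_hom \<psi>" and "\<And>a. \<psi> (\<phi> a) = a"
    and "squarefree (\<phi> p)"
  shows "squarefree p"
proof (rule squarefreeI)
  interpret \<phi>: comm_ring_hom \<phi> by fact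
  interpret \<psi>: comm_ring_hom \<psi> by fact
  fix a assume "a\<^sup>2 dvd p"
  then have "(\<phi> a)\<^sup>2 dvd \<phi> p"
    by (metis \<phi>.hom_dvd \<phi>.hom_power)
  then have "\<phi> a dvd 1"
    by (rule squarefreeD[OF assms(4)])
  then have "\<psi> (\<phi> a) dvd \<psi> 1"
    by (rule \<psi>.hom_dvd)
  then show "a dvd 1"
    by (simp add: assms(3))
qed

lemma squarefree_shear_iff: "squarefree (shear c P) \<longleftrightarrow> squarefree P"
proof
  assume "squarefree (shear c P)"
  then show "squarefree P"
    by (rule squarefree_reflect_hom[OF comm_ring_hom_shear comm_ring_hom_shear shear_neg_shear])
next
  assume "squarefree P"
  then have "squarefree (shear (- c) (shear c P))"
    by (simp add: shear_neg_shear)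
  then show "squarefree (shear c P)"
    by (rule squarefree_reflect_hom[OF comm_ring_hom_shear comm_ring_hom_shear
          shear_neg_shear[of "- c", simplified]])
qed

lemma var_y_power: "var_y ^ j = monom 1 j"
  by (simp only: var_y_def x_as_monom x_pow_n)

lemma const_mult_var_powers: "[:[:a:]:] * var_x ^ i * var_y ^ j = monom (monom a i) j"
proof -
  have "var_x ^ i = [:[:0, 1:] ^ i:]"
    by (simp add: var_x_def poly_const_pow)
  also have "[:0, 1:] ^ i = monom 1 i"
    by (simp only: x_as_monom x_pow_n)
  finally have x: "var_x ^ i = [:monom 1 i:]" .
  show ?thesis
    unfolding x var_y_power by (simp add: smult_monom)
qed

lemma total_degree_le_expansion:
  assumes "total_degree_le n P"
  shows "P = (\<Sum>(i, j)\<in>{..n} \<times> {..n}. monom (monom (bicoeff P i j) i) j)"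
proof (rule bicoeff_eqI)
  fix k l
  have "bicoeff (\<Sum>(i, j)\<in>{..n} \<times> {..n}. monom (monom (bicoeff P i j) i) j) k l =
      (\<Sum>x\<in>{..n} \<times> {..n}. if x = (k, l) then bicoeff P k l else 0)"
    unfolding bicoeff_sum by (intro sum.cong) (auto simp: bicoeff_monom split: if_splits)
  also have "\<dots> = bicoeff P k l"
    using assms by (auto simp: total_degree_le_def)
  finally show "bicoeff P k l =
      bicoeff (\<Sum>(i, j)\<in>{..n} \<times> {..n}. monom (monom (bicoeff P i j) i) j) k l"
    by simp
qed

lemma shear_expansion:
  assumes "total_degree_le n P"
  shows "shear c P =
    (\<Sum>(i, j)\<in>{..n} \<times> {..n}. [:[:bicoeff P i j:]:] * shear_x c ^ i * var_y ^ j)"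
proof -
  interpret comm_ring_hom "shear c"
    by (rule comm_ring_hom_shear)
  have "var_x + [:[:c:]:] * var_y = shear_x c"
    by (simp add: var_x_def var_y_def)
  then have "shear c (monom (monom a i) j) = [:[:a:]:] * shear_x c ^ i * var_y ^ j" for a i j
    unfolding const_mult_var_powers[symmetric]
    by (simp add: hom_mult hom_power del: mult_pCons_left)
  then show ?thesis
    using arg_cong[OF total_degree_le_expansion[OF assms], of "shear c"]
    by (simp add: hom_sum case_prod_unfold)
qed

lemma coeff_linear_power_top: "coeff ([:a, b:] ^ n) n = b ^ n"
  for a b :: "'a::comm_semiring_1"
proof (induction n)
  case (Suc n)
  have "degree ([:a, b:] ^ n) \<le> degree [:a, b:] * n"
    by (rule degree_power_le)
  also have "\<dots> \<le> n"
    by (simp add: degree_pCons_le)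
  finally have "coeff ([:a, b:] ^ n) (Suc n) = 0"
    by (simp add: coeff_eq_0)
  then show ?case
    using Suc.IH by simp
qed simp

lemma degree_sheared_monomial_le: "degree (shear_x c ^ i * var_y ^ j) \<le> i + j"
proof -
  have "degree (shear_x c) \<le> 1"
    using degree_pCons_le[of "[:0, 1:]" "[:[:c:]:]"] by simp
  then have "degree (shear_x c) * i \<le> i"
    using mult_le_mono1 by fastforce
  then have "degree (shear_x c ^ i) \<le> i"
    using degree_power_le order_trans by blast
  then show ?thesis
    using degree_mult_le[of "shear_x c ^ i" "var_y ^ j"]
    by (simp add: var_y_power degree_monom_eq)
qed

lemma coeff_sheared_monomial_top:
  "coeff (shear_x c ^ i * var_y ^ j) (i + j) = [:c ^ i:]"
  unfolding var_y_power mult.commute[of _ "monom 1 j"]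
  by (simp add: coeff_monom_mult coeff_linear_power_top poly_const_pow)

lemma shear_degree_le:
  assumes "total_degree_le n P"
  shows "degree (shear c P) \<le> n"
proof -
  have term_le: "degree ([:[:bicoeff P i j:]:] * shear_x c ^ i * var_y ^ j) \<le> n" for i j
  proof (cases "n < i + j")
    case True
    then show ?thesis
      using assms by (simp add: total_degree_le_def)
  next
    case False
    have "degree ([:[:bicoeff P i j:]:] * (shear_x c ^ i * var_y ^ j)) \<le>
        degree (shear_x c ^ i * var_y ^ j)"
      using degree_mult_le[of "[:[:bicoeff P i j:]:]"] by simp
    with False show ?thesis
      using degree_sheared_monomial_le[of c i j] by (simp add: mult.assoc)
  qed
  show ?thesis
    unfolding shear_expansion[OF assms] by (rule degree_sum_le) (use term_le in auto)
qed

lemma coeff_shear_top: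
  assumes "total_degree_le n P"
  shows "coeff (shear c P) n = [:poly (top_form P n) c:]"
proof -
  have "coeff (shear c P) n =
      (\<Sum>(i, j)\<in>{..n} \<times> {..n}. if i + j = n then [:bicoeff P i j * c ^ i:] else 0)"
    unfolding shear_expansion[OF assms] coeff_sum
  proof (intro sum.cong refl, clarify)
    fix i j
    have "coeff ([:[:bicoeff P i j:]:] * shear_x c ^ i * var_y ^ j) n =
        [:bicoeff P i j:] * coeff (shear_x c ^ i * var_y ^ j) n"
      by (simp add: mult.assoc)
    also have "\<dots> = (if i + j = n then [:bicoeff P i j * c ^ i:] else 0)"
    proof (cases "i + j \<le> n")
      case True
      then show ?thesis
        using coeff_sheared_monomial_top[of c i j] degree_sheared_monomial_le[of c i j]
        by (auto simp: coeff_eq_0)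
    next
      case False
      then show ?thesis
        using assms by (simp add: total_degree_le_def)
    qed
    finally show "coeff ([:[:bicoeff P i j:]:] * shear_x c ^ i * var_y ^ j) n =
        (if i + j = n then [:bicoeff P i j * c ^ i:] else 0)" .
  qed
  also have "\<dots> = (\<Sum>i\<le>n. \<Sum>j\<le>n. if j = n - i then [:bicoeff P i (n - i) * c ^ i:] else 0)"
    unfolding sum.cartesian_product[symmetric] by (intro sum.cong) auto
  also have "\<dots> = (\<Sum>i\<le>n. [:bicoeff P i (n - i) * c ^ i:])"
    by (simp add: sum.delta')
  also have "\<dots> = [:poly (top_form P n) c:]"
    by (simp add: sum_to_poly poly_top_form)
  finally show ?thesis .
qed

lemma shear_degree_lead:
  assumes "total_degree_le n P" and "poly (top_form P n) c \<noteq> 0"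
  shows "degree (shear c P) = n" and "lead_coeff (shear c P) = [:poly (top_form P n) c:]"
proof -
  show "degree (shear c P) = n"
    using shear_degree_le[OF assms(1)] coeff_shear_top[OF assms(1)] assms(2)
    by (metis le_antisym le_degree pCons_eq_0_iff)
  then show "lead_coeff (shear c P) = [:poly (top_form P n) c:]"
    by (simp add: coeff_shear_top[OF assms(1)])
qed

section \<open>Squarefreeness from one specialization\<close>

abbreviation eval_x :: "'a::comm_semiring_1 \<Rightarrow> 'a poly poly \<Rightarrow> 'a poly" where
  "eval_x x0 \<equiv> map_poly (\<lambda>a. poly a x0)"

lemma degree_eval_x: "poly (lead_coeff Q) x0 \<noteq> 0 \<Longrightarrow> degree (eval_x x0 Q) = degree Q"
  by (metis coeff_map_poly degree_map_poly_le le_antisym le_degree poly_0)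

lemma unit_lead_coeff_dvd:
  fixes p Q :: "'a::idom poly"
  assumes "lead_coeff Q dvd 1" and "p dvd Q"
  shows "lead_coeff p dvd 1"
proof -
  from assms(2) obtain r where "Q = p * r"
    by (rule dvdE)
  then have "lead_coeff Q = lead_coeff p * lead_coeff r"
    by (simp add: lead_coeff_mult)
  with assms(1) show ?thesis
    by (simp add: is_unit_mult_iff)
qed

lemma unit_if_degree_0_dvd:
  fixes p Q :: "'a::idom poly"
  assumes "lead_coeff Q dvd 1" and "p dvd Q" and "degree p = 0"
  shows "p dvd 1"
  using unit_lead_coeff_dvd[OF assms(1,2)] assms(3) by (metis degree_0_id is_unit_const_poly_iff)

lemma squarefree_of_squarefree_eval_x:
  fixes Q :: "'a::idom poly poly"
  assumes unit: "lead_coeff Q dvd 1" and sf: "squarefree (eval_x x0 Q)"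
  shows "squarefree Q"
proof (rule squarefreeI)
  interpret eval: map_poly_comm_ring_hom "\<lambda>a. poly a x0"
    by unfold_locales
  fix A assume "A\<^sup>2 dvd Q"
  then have "A dvd Q"
    by (metis dvd_mult_left power2_eq_square)
  have "(eval_x x0 A)\<^sup>2 dvd eval_x x0 Q"
    using \<open>A\<^sup>2 dvd Q\<close> by (metis eval.hom_dvd eval.hom_power)
  then have "eval_x x0 A dvd 1"
    by (rule squarefreeD[OF sf])
  moreover have "degree (eval_x x0 A) = degree A"
    using unit_lead_coeff_dvd[OF unit \<open>A dvd Q\<close>]
    by (auto elim!: is_unit_polyE intro!: degree_eval_x)
  ultimately have "degree A = 0"
    by (auto simp: is_unit_poly_iff)
  then show "A dvd 1"
    by (rule unit_if_degree_0_dvd[OF unit \<open>A dvd Q\<close>])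
qed

lemma squarefree_if_resultant_pderiv_nonzero:
  fixes q :: "'a::{field, factorial_ring_gcd, semiring_gcd_mult_normalize} poly"
  assumes "q \<noteq> 0" and "resultant q (pderiv q) \<noteq> 0"
  shows "squarefree q"
proof (rule squarefreeI)
  fix a assume "a\<^sup>2 dvd q"
  then obtain b where "q = a\<^sup>2 * b"
    by (rule dvdE)
  then have qab: "q = a * (a * b)"
    by (simp add: power2_eq_square mult.assoc)
  then have "a dvd gcd q (pderiv q)"
    by (simp add: pderiv_mult)
  moreover have "gcd q (pderiv q) \<noteq> 0" and "degree (gcd q (pderiv q)) = 0"
    using assms resultant_0_gcd by auto
  ultimately have "degree a = 0"
    by (metis dvd_imp_degree_le le_zero_eq)
  moreover have "a \<noteq> 0"
    using assms(1) qab by auto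
  ultimately show "a dvd 1"
    by (simp add: is_unit_iff_degree)
qed

lemma resultant_pderiv_nonzero_if_squarefree:
  fixes Q :: "'a::{field_gcd, semiring_gcd_mult_normalize, field_char_0} poly poly"
  assumes sf: "squarefree Q" and unit: "lead_coeff Q dvd 1"
  shows "resultant Q (pderiv Q) \<noteq> 0"
proof
  assume "resultant Q (pderiv Q) = 0"
  then have "\<not> gcd Q (pderiv Q) dvd 1"
    using resultant_0_gcd[of Q "pderiv Q"] by (auto simp: is_unit_poly_iff)
  moreover have "gcd Q (pderiv Q) \<noteq> 0"
    using unit by auto
  ultimately obtain p where p: "prime p" "p dvd gcd Q (pderiv Q)"
    using prime_divisor_exists by blast
  then have "p dvd Q" and "p dvd pderiv Q"
    by (auto intro: dvd_trans)
  then obtain r where Qr: "Q = p * r"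
    by (elim dvdE)
  have "p dvd r * pderiv p"
    using \<open>p dvd pderiv Q\<close> unfolding Qr pderiv_mult by (simp add: dvd_add_right_iff)
  moreover have "\<not> p dvd r"
  proof
    assume "p dvd r"
    then have "p\<^sup>2 dvd Q"
      unfolding Qr power2_eq_square by simp
    then show False
      using sf p(1) by (auto dest: squarefreeD simp: not_prime_unit)
  qed
  moreover have "\<not> p dvd pderiv p"
  proof
    assume "p dvd pderiv p"
    then have "p dvd 1"
      using unit_if_degree_0_dvd[OF unit \<open>p dvd Q\<close>] by simp
    then show False
      using p(1) by (simp add: not_prime_unit)
  qed
  ultimately show False
    using p(1) prime_dvd_mult_iff by blast
qed

text \<open>For \<open>degree q = n\<close> this is the resultant of \<open>q\<close> and \<open>q'\<close>; fixing the size of the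
  Sylvester matrix in advance makes it depend continuously on the coefficients of \<open>P\<close>.\<close>

definition shear_disc :: "nat \<Rightarrow> complex \<Rightarrow> complex \<Rightarrow> complex poly poly \<Rightarrow> complex" where
  "shear_disc n c x0 P =
    (let q = eval_x x0 (shear c P) in Determinant.det (sylvester_mat_sub n (n - 1) q (pderiv q)))"

lemma shear_disc_eq_resultant:
  assumes "total_degree_le n P" and "poly (top_form P n) c \<noteq> 0"
  shows "shear_disc n c x0 P =
    resultant (eval_x x0 (shear c P)) (pderiv (eval_x x0 (shear c P)))"
proof -
  have "degree (eval_x x0 (shear c P)) = n"
    using shear_degree_lead[OF assms] assms(2) by (simp add: degree_eval_x)
  then show ?thesis
    by (simp add: shear_disc_def Let_def resultant_sub resultant_sub_def degree_pderiv)
qed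

lemma squarefree_tdeg_if_shear_disc:
  assumes "total_degree_le n P" and top: "poly (top_form P n) c \<noteq> 0"
    and "shear_disc n c x0 P \<noteq> 0"
  shows "squarefree P \<and> tdeg P = n"
proof -
  let ?Q = "shear c P"
  have lead: "lead_coeff ?Q = [:poly (top_form P n) c:]"
    using shear_degree_lead[OF assms(1) top] by simp
  then have unit: "lead_coeff ?Q dvd 1"
    using top by (simp add: is_unit_const_poly_iff)
  have "coeff (eval_x x0 ?Q) (degree ?Q) \<noteq> 0"
    using lead top by (simp add: coeff_map_poly)
  then have "eval_x x0 ?Q \<noteq> 0"
    by (metis coeff_0)
  moreover have "resultant (eval_x x0 ?Q) (pderiv (eval_x x0 ?Q)) \<noteq> 0"
    using assms shear_disc_eq_resultant by simp
  ultimately have "squarefree (eval_x x0 ?Q)"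
    by (rule squarefree_if_resultant_pderiv_nonzero)
  then have "squarefree ?Q"
    by (rule squarefree_of_squarefree_eval_x[OF unit])
  moreover have "tdeg P = n"
    using top_form_nonzero_iff_tdeg[OF assms(1)] top by auto
  ultimately show ?thesis
    by (simp add: squarefree_shear_iff)
qed

lemma shear_disc_witness:
  assumes "total_degree_le n P" and "squarefree P" and "tdeg P = n"
  obtains c x0 where "poly (top_form P n) c \<noteq> 0" and "shear_disc n c x0 P \<noteq> 0"
proof -
  have "top_form P n \<noteq> 0"
    using assms top_form_nonzero_iff_tdeg not_squarefree_0 by blast
  then obtain c where top: "poly (top_form P n) c \<noteq> 0"
    using poly_all_0_iff_0 by blast
  let ?Q = "shear c P"
  have lead: "lead_coeff ?Q = [:poly (top_form P n) c:]"
    using shear_degree_lead[OF assms(1) top] by simp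
  then have "lead_coeff ?Q dvd 1"
    using top by (simp add: is_unit_const_poly_iff)
  moreover have "squarefree ?Q"
    using assms(2) by (simp add: squarefree_shear_iff)
  ultimately have "resultant ?Q (pderiv ?Q) \<noteq> 0"
    by (intro resultant_pderiv_nonzero_if_squarefree)
  then obtain x0 where x0: "poly (resultant ?Q (pderiv ?Q)) x0 \<noteq> 0"
    using poly_all_0_iff_0 by blast
  have deg: "degree (eval_x x0 ?Q) = degree ?Q"
    using lead top by (simp add: degree_eval_x)
  have "shear_disc n c x0 P = resultant (eval_x x0 ?Q) (eval_x x0 (pderiv ?Q))"
    using shear_disc_eq_resultant[OF assms(1) top] by (simp add: poly_hom.map_poly_pderiv)
  also have "\<dots> = poly (resultant ?Q (pderiv ?Q)) x0"
    by (rule poly_hom.resultant_map_poly)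
      (simp_all add: deg poly_hom.map_poly_pderiv degree_pderiv)
  finally have "shear_disc n c x0 P \<noteq> 0"
    using x0 by simp
  with top show thesis
    by (rule that)
qed

lemma continuous_on_top_form:
  "coeffwise_continuous_on S P \<Longrightarrow> continuous_on S (\<lambda>F. poly (top_form (P F) n) c)"
  unfolding coeffwise_continuous_on_def poly_top_form by (intro continuous_intros) auto

lemma coeff_eval_x_shear:
  assumes "total_degree_le n P"
  shows "coeff (eval_x x0 (shear c P)) k = (\<Sum>(i, j)\<in>{..n} \<times> {..n}.
    bicoeff P i j * poly (coeff (shear_x c ^ i * var_y ^ j) k) x0)"
  by (simp add: shear_expansion[OF assms] coeff_map_poly coeff_sum poly_sum case_prod_beta
      mult.assoc)

lemma continuous_on_shear_disc:
  assumes "coeffwise_continuous_on S P" and "\<And>F. F \<in> S \<Longrightarrow> total_degree_le n (P F)"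
  shows "continuous_on S (\<lambda>F. shear_disc n c x0 (P F))"
proof -
  have coeff: "continuous_on S (\<lambda>F. coeff (eval_x x0 (shear c (P F))) k)" for k
  proof (rule continuous_on_eq)
    show "continuous_on S (\<lambda>F. \<Sum>(i, j)\<in>{..n} \<times> {..n}.
        bicoeff (P F) i j * poly (coeff (shear_x c ^ i * var_y ^ j) k) x0)"
      using assms(1) unfolding coeffwise_continuous_on_def case_prod_beta
      by (intro continuous_intros) auto
  qed (rule coeff_eval_x_shear[symmetric, OF assms(2)])
  then have "continuous_on S (\<lambda>F. coeff (pderiv (eval_x x0 (shear c (P F)))) k)" for k
    unfolding coeff_pderiv by (intro continuous_intros)
  with coeff show ?thesis
    unfolding shear_disc_def Let_def by (intro continuous_on_det_sylvester_mat_sub)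
qed

lemma openin_squarefree_tdeg_eq:
  assumes cont: "coeffwise_continuous_on S P"
    and deg: "\<And>F. F \<in> S \<Longrightarrow> total_degree_le n (P F)"
  shows "openin (top_of_set S) {F \<in> S. squarefree (P F) \<and> tdeg (P F) = n}"
proof (subst openin_subopen, intro ballI)
  fix F0 assume "F0 \<in> {F \<in> S. squarefree (P F) \<and> tdeg (P F) = n}"
  then have "F0 \<in> S" and "squarefree (P F0)" and "tdeg (P F0) = n"
    by auto
  then obtain c x0 where F0: "poly (top_form (P F0) n) c \<noteq> 0" "shear_disc n c x0 (P F0) \<noteq> 0"
    using deg shear_disc_witness by metis
  define T where
    "T = S \<inter> (\<lambda>F. poly (top_form (P F) n) c * shear_disc n c x0 (P F)) -` (- {0})"
  have "openin (top_of_set S) T"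
    unfolding T_def using continuous_on_top_form[OF cont] continuous_on_shear_disc[OF cont deg]
    by (intro continuous_openin_preimage_gen continuous_intros) auto
  moreover have "F0 \<in> T"
    using \<open>F0 \<in> S\<close> F0 by (simp add: T_def)
  moreover have "T \<subseteq> {F \<in> S. squarefree (P F) \<and> tdeg (P F) = n}"
    using squarefree_tdeg_if_shear_disc[OF deg] by (fastforce simp: T_def)
  ultimately show "\<exists>T. openin (top_of_set S) T \<and> F0 \<in> T \<and>
      T \<subseteq> {F \<in> S. squarefree (P F) \<and> tdeg (P F) = n}"
    by blast
qed

theorem lemma3p3:
  fixes d1 d2 :: nat
  assumes "0 < d1" and "0 < d2"
  shows "openin (top_of_set (Omega2 d1 d2))
           {F \<in> Omega2 d1 d2. squarefree (jac (bipoly (fst F)) (bipoly (snd F)))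
                              \<and> tdeg (jac (bipoly (fst F)) (bipoly (snd F))) = d1 + d2 - 2}"
proof (rule openin_squarefree_tdeg_eq)
  show "coeffwise_continuous_on (Omega2 d1 d2) (\<lambda>F. jac (bipoly (fst F)) (bipoly (snd F)))"
    by (intro coeffwise_continuous_on_jac coeffwise_continuous_on_Omega2_bipoly)
  fix F assume "F \<in> Omega2 d1 d2"
  then have "total_degree_le (d1 - 1 + (d2 - 1)) (jac (bipoly (fst F)) (bipoly (snd F)))"
    by (intro total_degree_le_jac total_degree_le_bipoly) (auto simp: Omega2_def)
  with assms show "total_degree_le (d1 + d2 - 2) (jac (bipoly (fst F)) (bipoly (snd F)))"
    by (simp add: numeral_2_eq_2)
qed

end
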